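(* Let $\mu,\nu,k$ be integers with $0\le k\le \mu<\nu$. Let $J_k^*:\mathcal{H}_{\mu+\nu-2k}\to\mathcal{H}_\mu\otimes\mathcal{H}_\nu$ be the Hilbert space adjoint of $J_k$ and let $1$ denote the constant function in $\mathcal{H}_{\mu+\nu-2k}$. Then $$J_k\big(J_k^*(1)\big)(0)=\frac{k!\,(\mu+\nu-2k+2)_k}{(-\nu)_k\,(-\mu)_k}.$$
   Context: For an integer $\tau\ge 0$, $\mathcal{H}_\tau$ is the space of polynomials in one complex variable of degree at most $\tau$, with inner product $\langle f,g\rangle=\int_{\mathbb{C}} f\,\overline{g}\,d\iota_\tau$, where $d\iota_\tau(z)=\frac{\tau+1}{(1+|z|^2)^{\tau}}\frac{dA(z)}{\pi(1+|z|^2)^2}$ and $dA$ is Lebesgue measure on $\mathbb{C}$. The tensor product $\mathcal{H}_\mu\otimes\mathcal{H}_\nu$ is realized as the space of polynomials $F(z,w)$ of degree $\le\mu$ in $z$ and $\le\nu$ in $w$ with the inner product of $L^2(d\iota_\mu(z)\,d\iota_\nu(w))$. The map $J_k:\mathcal{H}_\mu\otimes\mathcal{H}_\nu\to\mathcal{H}_{\mu+\nu-2k}$ is $$J_k(F)(\xi)=\int_{\mathbb{C}^2}F(z,w)(\overline{z}-\overline{w})^k(1+\xi\overline{z})^{\mu-k}(1+\xi\overline{w})^{\nu-k}\,d\iota_\mu(z)\,d\iota_\nu(w).$$ $(a)_n=a(a+1)\cdots(a+n-1)$ denotes the rising Pochhammer symbol. *)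

theory Defs
  imports "HOL-Analysis.Analysis"
begin

definition iota :: "nat \<Rightarrow> complex measure" where
  "iota \<tau> = density lborel
     (\<lambda>z. ennreal ((real \<tau> + 1) / (pi * (1 + (cmod z)\<^sup>2) ^ (\<tau> + 2))))"

definition Hspace :: "nat \<Rightarrow> (complex \<Rightarrow> complex) set" where
  "Hspace \<tau> = {f. \<exists>c :: nat \<Rightarrow> complex. f = (\<lambda>z. \<Sum>i\<le>\<tau>. c i * z ^ i)}"

definition innerH :: "nat \<Rightarrow> (complex \<Rightarrow> complex) \<Rightarrow> (complex \<Rightarrow> complex) \<Rightarrow> complex" where
  "innerH \<tau> f g = (LINT z | iota \<tau>. f z * cnj (g z))"

text \<open>H_mu tensor H_nu: polynomials F(z,w) of degree at most mu in z and at most nu in w.\<close>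
definition Tspace :: "nat \<Rightarrow> nat \<Rightarrow> (complex \<times> complex \<Rightarrow> complex) set" where
  "Tspace \<mu> \<nu> = {F. \<exists>c :: nat \<Rightarrow> nat \<Rightarrow> complex.
      F = (\<lambda>(z, w). \<Sum>i\<le>\<mu>. \<Sum>j\<le>\<nu>. c i j * z ^ i * w ^ j)}"

definition innerT :: "nat \<Rightarrow> nat \<Rightarrow> (complex \<times> complex \<Rightarrow> complex)
    \<Rightarrow> (complex \<times> complex \<Rightarrow> complex) \<Rightarrow> complex" where
  "innerT \<mu> \<nu> F G = (LINT p | (iota \<mu> \<Otimes>\<^sub>M iota \<nu>). F p * cnj (G p))"

definition Jk :: "nat \<Rightarrow> nat \<Rightarrow> nat \<Rightarrow> (complex \<times> complex \<Rightarrow> complex) \<Rightarrow> complex \<Rightarrow> complex" where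
  "Jk \<mu> \<nu> k F \<xi> = (LINT p | (iota \<mu> \<Otimes>\<^sub>M iota \<nu>).
      F p * (cnj (fst p) - cnj (snd p)) ^ k * (1 + \<xi> * cnj (fst p)) ^ (\<mu> - k)
        * (1 + \<xi> * cnj (snd p)) ^ (\<nu> - k))"

definition Jk_adj :: "nat \<Rightarrow> nat \<Rightarrow> nat \<Rightarrow> (complex \<Rightarrow> complex) \<Rightarrow> complex \<times> complex \<Rightarrow> complex" where
  "Jk_adj \<mu> \<nu> k g = (THE G. G \<in> Tspace \<mu> \<nu> \<and>
      (\<forall>F\<in>Tspace \<mu> \<nu>. innerH (\<mu> + \<nu> - 2 * k) (Jk \<mu> \<nu> k F) g = innerT \<mu> \<nu> F G))"

end

theory Submission
  imports Defs "HOL-Computational_Algebra.Formal_Power_Series"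
begin

(*
  The monomials z^i w^j are orthogonal in H_mu (x) H_nu, with squared norms
  1 / (binom(mu, i) binom(nu, j)): the off-diagonal moments of iota_tau vanish because
  iota_tau is invariant under rotations z |-> u z, and the diagonal ones reduce, through the
  radial variable t = |z|^2, to the beta integral of t^a / (1 + t)^(tau + 2) over [0, oo).

  Expanding J_k F (xi) in powers of xi and integrating against iota_(mu+nu-2k) keeps only the
  constant term J_k F (0) = <F, (z - w)^k>, so J_k^*(1) = (z - w)^k.  Hence
  J_k (J_k^* 1)(0) = ||(z - w)^k||^2 = sum_i binom(k, i)^2 / (binom(mu, i) binom(nu, k - i)),
  and a Chu-Vandermonde convolution evaluates this sum to the stated Pochhammer quotient.
*)

lemma diff_power_binomial:
  fixes a b :: "'a::comm_ring_1"
  shows "(a - b) ^ k = (\<Sum>r\<le>k. of_nat (k choose r) * (- 1) ^ (k - r) * a ^ r * b ^ (k - r))"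
  using binomial_ring[of a "- b" k] by (simp add: power_minus[of b] mult_ac)

lemma one_plus_power_binomial:
  fixes x :: "'a::comm_semiring_1"
  shows "(1 + x) ^ n = (\<Sum>p\<le>n. of_nat (n choose p) * x ^ p)"
  using binomial_ring[of x 1 n] by (simp add: add.commute)

lemma sum_sum_if_add_eq:
  fixes h :: "nat \<Rightarrow> nat \<Rightarrow> 'a::comm_monoid_add"
  assumes "k \<le> m" "k \<le> n"
  shows "(\<Sum>i\<le>m. \<Sum>j\<le>n. if i + j = k then h i j else 0) = (\<Sum>i\<le>k. h i (k - i))"
proof -
  have "(\<Sum>j\<le>n. if i + j = k then h i j else 0) = (if i \<in> {..k} then h i (k - i) else 0)" for i
  proof -
    have "(\<Sum>j\<le>n. if i + j = k then h i j else 0) = (\<Sum>j\<le>n. if j = k - i then (if i \<le> k then h i j else 0) else 0)"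
      by (intro sum.cong) auto
    then show ?thesis
      using assms by (auto simp: sum.delta')
  qed
  then have "(\<Sum>i\<le>m. \<Sum>j\<le>n. if i + j = k then h i j else 0)
      = (\<Sum>i\<le>m. if i \<in> {..k} then h i (k - i) else 0)"
    by simp
  also have "\<dots> = (\<Sum>i\<in>{..m} \<inter> {..k}. h i (k - i))"
    by (rule sum.inter_restrict[symmetric]) simp
  also have "{..m} \<inter> {..k} = {..k}"
    using assms by auto
  finally show ?thesis .
qed

lemma integral_double_sum:
  fixes T :: "'i \<Rightarrow> 'j \<Rightarrow> 'a \<Rightarrow> 'b::{banach, second_countable_topology}"
  assumes "finite A" "finite B" "\<And>i j. i \<in> A \<Longrightarrow> j \<in> B \<Longrightarrow> integrable M (T i j)"
  shows "integrable M (\<lambda>x. \<Sum>i\<in>A. \<Sum>j\<in>B. T i j x)"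
    and "(\<integral>x. (\<Sum>i\<in>A. \<Sum>j\<in>B. T i j x) \<partial>M) = (\<Sum>i\<in>A. \<Sum>j\<in>B. integral\<^sup>L M (T i j))"
  using assms by (auto intro!: Bochner_Integration.integrable_sum sum.cong
      simp: Bochner_Integration.integral_sum)

lemma (in pair_sigma_finite) integral_mult_fst_snd:
  fixes f :: "'a \<Rightarrow> complex" and g :: "'b \<Rightarrow> complex"
  assumes f: "integrable M1 f" and g: "integrable M2 g"
  shows "integrable (M1 \<Otimes>\<^sub>M M2) (\<lambda>p. f (fst p) * g (snd p))"
    and "(LINT p|(M1 \<Otimes>\<^sub>M M2). f (fst p) * g (snd p)) = (LINT x|M1. f x) * (LINT y|M2. g y)"
proof -
  have [measurable]: "f \<in> borel_measurable M1" "g \<in> borel_measurable M2"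
    using f g by auto
  show I: "integrable (M1 \<Otimes>\<^sub>M M2) (\<lambda>p. f (fst p) * g (snd p))"
    using f g by (intro Fubini_integrable) (auto simp: norm_mult)
  show "(LINT p|(M1 \<Otimes>\<^sub>M M2). f (fst p) * g (snd p)) = (LINT x|M1. f x) * (LINT y|M2. g y)"
    using integral_fst'[OF I] by simp
qed

section \<open>Rotation invariance and polar coordinates on \<open>\<complex>\<close>\<close>

abbreviation lborel2 :: "(real \<times> real) measure" where
  "lborel2 \<equiv> lborel \<Otimes>\<^sub>M lborel"

lemma measurable_Complex_pair [measurable]:
  "(\<lambda>(x, y). Complex x y) \<in> borel_measurable lborel2"
  unfolding Complex_eq by (simp add: case_prod_beta')

lemma lborel_complex_eq_distr_lborel2:
  "(lborel :: complex measure) = distr lborel2 borel (\<lambda>(x, y). Complex x y)"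
proof (rule lborel_eqI)
  fix l u :: complex
  assume le: "\<And>b. b \<in> Basis \<Longrightarrow> l \<bullet> b \<le> u \<bullet> b"
  then have "Re l \<le> Re u" "Im l \<le> Im u"
    using le[of 1] le[of \<i>] by (auto simp: Basis_complex_def)
  moreover have "(\<lambda>(x, y). Complex x y) -` box l u \<inter> space lborel2
      = {Re l<..<Re u} \<times> {Im l<..<Im u}"
    by (auto simp: box_def Basis_complex_def space_pair_measure)
  ultimately show "emeasure (distr lborel2 borel (\<lambda>(x, y). Complex x y)) (box l u)
      = (\<Prod>b\<in>Basis. (u - l) \<bullet> b)"
    by (simp add: emeasure_distr lborel.emeasure_pair_measure_Times Basis_complex_def ennreal_mult)
qed simp

lemma distr_lborel2_comp:
  assumes "f \<in> lborel2 \<rightarrow>\<^sub>M lborel2" "g \<in> lborel2 \<rightarrow>\<^sub>M lborel2"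
    and "distr lborel2 lborel2 f = lborel2" "distr lborel2 lborel2 g = lborel2"
  shows "distr lborel2 lborel2 (f \<circ> g) = lborel2"
  using assms by (simp add: distr_distr[symmetric])

lemma distr_lborel2_shear_fst:
  "distr lborel2 lborel2 (\<lambda>(x, y). (x + a * y, y)) = lborel2"
proof (rule measure_eqI)
  fix A assume A': "A \<in> sets (distr lborel2 lborel2 (\<lambda>(x, y). (x + a * y, y)))"
  then have A [measurable]: "A \<in> sets lborel2" by simp
  have m: "(\<lambda>(x, y). (x + a * y, y)) \<in> lborel2 \<rightarrow>\<^sub>M lborel2"
    by (simp add: case_prod_beta')
  have "emeasure (distr lborel2 lborel2 (\<lambda>(x, y). (x + a * y, y))) A
      = (\<integral>\<^sup>+p. indicator A p \<partial>distr lborel2 lborel2 (\<lambda>(x, y). (x + a * y, y)))"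
    using A' by (rule nn_integral_indicator[symmetric])
  also have "\<dots> = (\<integral>\<^sup>+p. indicator A ((\<lambda>(x, y). (x + a * y, y)) p) \<partial>lborel2)"
    by (rule nn_integral_distr[OF m]) simp
  also have "\<dots> = (\<integral>\<^sup>+y. \<integral>\<^sup>+x. indicator A (x + a * y, y) \<partial>lborel \<partial>lborel)"
    by (subst lborel_pair.nn_integral_snd[symmetric]) auto
  also have "\<dots> = (\<integral>\<^sup>+y. \<integral>\<^sup>+x. indicator A (x, y) \<partial>lborel \<partial>lborel)"
  proof (rule nn_integral_cong)
    fix y :: real
    show "(\<integral>\<^sup>+x. indicator A (x + a * y, y) \<partial>lborel) = (\<integral>\<^sup>+x. indicator A (x, y) \<partial>lborel)"
      using nn_integral_real_affine[of "\<lambda>x. indicator A (x, y)" 1 "a * y"] by (simp add: add.commute)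
  qed
  also have "\<dots> = emeasure lborel2 A"
    using A by (subst lborel_pair.nn_integral_snd) auto
  finally show "emeasure (distr lborel2 lborel2 (\<lambda>(x, y). (x + a * y, y))) A = emeasure lborel2 A" .
qed simp

lemma distr_lborel2_shear_snd:
  "distr lborel2 lborel2 (\<lambda>(x, y). (x, y + b * x)) = lborel2"
proof -
  let ?swap = "\<lambda>(x, y). (y, x) :: real \<times> real"
  have swap: "distr lborel2 lborel2 ?swap = lborel2"
    by (rule lborel_pair.distr_pair_swap[symmetric])
  have "(\<lambda>(x, y). (x, y + b * x)) = ?swap \<circ> ((\<lambda>(x, y). (x + b * y, y)) \<circ> ?swap)"
    by auto
  then show ?thesis
    by (simp only:) (intro distr_lborel2_comp swap distr_lborel2_shear_fst; simp add: case_prod_beta')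
qed

lemma distr_lborel2_rotation_not_half_turn:
  fixes c s :: real
  assumes cs: "c\<^sup>2 + s\<^sup>2 = 1" and "c \<noteq> -1"
  shows "distr lborel2 lborel2 (\<lambda>(x, y). (c * x - s * y, s * x + c * y)) = lborel2"
proof -
  \<comment> \<open>the rotation is the product of three shears, with \<open>t = tan (\<theta>/2)\<close>\<close>
  define t where "t = s / (1 + c)"
  have "1 + c \<noteq> 0" using \<open>c \<noteq> -1\<close> by linarith
  then have ts: "t * s = 1 - c" and tc: "t * (1 + c) = s"
    using cs by (auto simp: t_def field_simps power2_eq_square)
  let ?S1 = "\<lambda>(x, y). (x + (- t) * y, y :: real)" and ?S2 = "\<lambda>(x, y). (x, y + s * x :: real)"
  have "(\<lambda>(x, y). (c * x - s * y, s * x + c * y)) = ?S1 \<circ> (?S2 \<circ> ?S1)"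
  proof (intro ext, clarsimp)
    fix x y :: real
    have "x - t * y - t * (y + s * (x - t * y)) = (1 - t * s) * x - t * (1 + (1 - t * s)) * y"
      by (simp add: algebra_simps)
    moreover have "y + s * (x - t * y) = s * x + (1 - t * s) * y"
      by (simp add: algebra_simps)
    ultimately show "c * x - s * y = x - t * y - t * (y + s * (x - t * y)) \<and>
        s * x + c * y = y + s * (x - t * y)"
      using ts tc by simp
  qed
  then show ?thesis
    by (simp only:) (intro distr_lborel2_comp distr_lborel2_shear_fst distr_lborel2_shear_snd;
        simp add: case_prod_beta')
qed

lemma distr_lborel2_rotation:
  fixes c s :: real
  assumes "c\<^sup>2 + s\<^sup>2 = 1"
  shows "distr lborel2 lborel2 (\<lambda>(x, y). (c * x - s * y, s * x + c * y)) = lborel2"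
proof (cases "c = -1")
  case True
  then have "s = 0"
    using assms by (simp add: power2_eq_square)
  have "(\<lambda>(x, y). (c * x - s * y, s * x + c * y)) =
      (\<lambda>(x, y). (0 * x - 1 * y, 1 * x + 0 * y)) \<circ> (\<lambda>(x, y). (0 * x - 1 * y, 1 * x + 0 * y))"
    using True \<open>s = 0\<close> by auto
  then show ?thesis
    by (simp only:) (intro distr_lborel2_comp distr_lborel2_rotation_not_half_turn;
        simp add: case_prod_beta')
qed (use assms distr_lborel2_rotation_not_half_turn in auto)

lemma lborel_complex_distr_mult_unit:
  fixes u :: complex
  assumes "cmod u = 1"
  shows "distr lborel borel (\<lambda>z. u * z) = lborel"
proof -
  let ?C = "\<lambda>(x, y). Complex x y"
  let ?R = "\<lambda>(x, y). (Re u * x - Im u * y, Im u * x + Re u * y)"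
  have "(Re u)\<^sup>2 + (Im u)\<^sup>2 = 1"
    using assms by (simp add: cmod_def)
  then have R: "distr lborel2 lborel2 ?R = lborel2"
    by (rule distr_lborel2_rotation)
  have "(\<lambda>z. u * z) \<circ> ?C = ?C \<circ> ?R"
    by (auto simp: complex_eq_iff algebra_simps)
  then have "distr lborel borel (\<lambda>z. u * z) = distr (distr lborel2 lborel2 ?R) borel ?C"
    by (subst lborel_complex_eq_distr_lborel2, subst (1 2) distr_distr)
      (auto simp: case_prod_beta')
  then show ?thesis
    by (simp add: R flip: lborel_complex_eq_distr_lborel2)
qed

lemma distr_lborel_complex_norm_square:
  "distr (lborel :: complex measure) borel (\<lambda>z. (cmod z)\<^sup>2)
    = density lborel (\<lambda>t. ennreal pi * indicator {0..} t)"
  (is "?M = ?N")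
proof (rule measure_eqI_generator_eq[where E = "range atMost" and \<Omega> = UNIV
      and A = "\<lambda>i. {..real i}"])
  show "Int_stable (range (atMost :: real \<Rightarrow> _))"
    by (auto simp: Int_stable_def image_def)
  show "sets ?M = sigma_sets UNIV (range atMost)" "sets ?N = sigma_sets UNIV (range atMost)"
    by (simp_all add: borel_eq_atMost)
  show "range (\<lambda>i. {..real i}) \<subseteq> range atMost" "range atMost \<subseteq> Pow UNIV"
    by auto
  show "(\<Union>i. {..real i}) = UNIV"
    by (auto intro: real_arch_simple)
  have atMost: "emeasure ?M {..a} = ennreal (pi * a)" "emeasure ?N {..a} = ennreal (pi * a)"
    for a :: real
  proof -
    have "emeasure ?N {..a} = (\<integral>\<^sup>+t. ennreal pi * indicator {0..a} t \<partial>lborel)"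
      by (auto simp: emeasure_density intro!: nn_integral_cong split: split_indicator)
    also have "\<dots> = ennreal pi * emeasure lborel {0..a}"
      by (rule nn_integral_cmult_indicator) simp
    finally show "emeasure ?N {..a} = ennreal (pi * a)"
      by (cases "0 \<le> a") (simp_all add: ennreal_mult' ennreal_neg)
    have "emeasure ?M {..a} = emeasure lborel {z :: complex. (cmod z)\<^sup>2 \<le> a}"
      by (subst emeasure_distr) (auto intro!: arg_cong[where f = "emeasure lborel"])
    moreover have "{z :: complex. (cmod z)\<^sup>2 \<le> a} = cball 0 (sqrt a)"
      by (auto simp: real_le_rsqrt intro: sqrt_ge_absD)
    ultimately show "emeasure ?M {..a} = ennreal (pi * a)"
      by (cases "0 \<le> a") (simp_all add: emeasure_cball unit_ball_vol_2 ennreal_neg mult_le_0_iff)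
  qed
  show "emeasure ?M X = emeasure ?N X" if "X \<in> range atMost" for X
    using that atMost by auto
  show "emeasure ?M {..real i} \<noteq> \<infinity>" for i
    using atMost by simp
qed

lemma nn_integral_lborel_complex_radial:
  fixes g :: "real \<Rightarrow> ennreal"
  assumes [measurable]: "g \<in> borel_measurable borel"
  shows "(\<integral>\<^sup>+z. g ((cmod z)\<^sup>2) \<partial>(lborel :: complex measure))
    = ennreal pi * (\<integral>\<^sup>+t. g t * indicator {0..} t \<partial>lborel)"
proof -
  have "(\<integral>\<^sup>+z. g ((cmod z)\<^sup>2) \<partial>(lborel :: complex measure))
      = (\<integral>\<^sup>+t. g t \<partial>distr (lborel :: complex measure) borel (\<lambda>z. (cmod z)\<^sup>2))"
    by (simp add: nn_integral_distr)
  also have "\<dots> = (\<integral>\<^sup>+t. ennreal pi * (g t * indicator {0..} t) \<partial>lborel)"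
    unfolding distr_lborel_complex_norm_square by (simp add: nn_integral_density mult_ac)
  finally show ?thesis
    by (simp add: nn_integral_cmult)
qed

section \<open>A beta integral\<close>

lemma nn_integral_inverse_one_plus_power:
  "(\<integral>\<^sup>+t. ennreal (1 / (1 + t) ^ (s + 2)) * indicator {0..} t \<partial>lborel) = ennreal (1 / (real s + 1))"
proof -
  define F where "F t = - inverse ((real s + 1) * (1 + t) ^ (s + 1))" for t :: real
  have "DERIV F t :> 1 / (1 + t) ^ (s + 2)" if "0 \<le> t" for t
  proof -
    let ?g = "\<lambda>t. (real s + 1) * (1 + t) ^ (s + 1)"
    have "DERIV ?g t :> (real s + 1) * ((real s + 1) * (1 + t) ^ s)"
      by (auto intro!: derivative_eq_intros) (cases s, auto simp: algebra_simps)
    then have "DERIV (\<lambda>t. - inverse (?g t)) t :>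
        - (- ((real s + 1) * ((real s + 1) * (1 + t) ^ s) * inverse (?g t ^ Suc (Suc 0))))"
      by (rule DERIV_minus[OF DERIV_inverse_fun]) (use that in simp)
    moreover have "(\<lambda>t. - inverse (?g t)) = F"
      by (simp add: fun_eq_iff F_def)
    moreover have "c * (c * x ^ s) * inverse ((c * x ^ (s + 1)) ^ Suc (Suc 0)) = 1 / x ^ (s + 2)"
      if "c \<noteq> 0" "x \<noteq> 0" for c x :: real
      using that by (simp add: field_simps power_add power2_eq_square)
    ultimately show ?thesis
      using \<open>0 \<le> t\<close> by (simp only:) simp
  qed
  moreover have "(F \<longlongrightarrow> 0) at_top"
    unfolding F_def by real_asymp
  ultimately have "(\<integral>\<^sup>+t. ennreal (1 / (1 + t) ^ (s + 2)) * indicator {0..} t \<partial>lborel) = ennreal (0 - F 0)"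
    by (intro nn_integral_FTC_atLeast) auto
  then show ?thesis by (simp add: F_def inverse_eq_divide)
qed

lemma fact_recurrence_beta:
  "fact a * fact d / fact (a + d + 1) - fact a * fact (Suc d) / fact (a + d + 2)
     = (fact (Suc a) * fact d / fact (a + d + 2) :: real)"
proof -
  have "a + d + 2 = Suc (a + d + 1)" by simp
  then have "(fact (a + d + 2) :: real) = (real a + real d + 2) * fact (a + d + 1)"
    by (simp only: fact_Suc) simp
  then show ?thesis
    by (simp add: divide_simps del: fact_Suc) (simp add: algebra_simps)
qed

lemma nn_integral_beta_prime_add:
  "(\<integral>\<^sup>+t. ennreal (t ^ Suc a / (1 + t) ^ (s + 3)) * indicator {0..} t \<partial>lborel)
    + (\<integral>\<^sup>+t. ennreal (t ^ a / (1 + t) ^ (s + 3)) * indicator {0..} t \<partial>lborel)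
    = (\<integral>\<^sup>+t. ennreal (t ^ a / (1 + t) ^ (s + 2)) * indicator {0..} t \<partial>lborel)"
proof -
  have "ennreal (t ^ Suc a / (1 + t) ^ (s + 3)) * indicator {0..} t
      + ennreal (t ^ a / (1 + t) ^ (s + 3)) * indicator {0..} t
      = ennreal (t ^ a / (1 + t) ^ (s + 2)) * indicator {0..} t" for t :: real
  proof (cases "t \<ge> 0")
    case True
    have frac: "x * p / (y * q) + p / (y * q) = p / q" if "y = x + 1" "y \<noteq> 0" "q \<noteq> 0"
      for x y p q :: real
      using that by (simp add: divide_simps) (simp add: algebra_simps)
    have "s + 3 = Suc (s + 2)"
      by simp
    then have "(1 + t) ^ (s + 3) = (1 + t) * (1 + t) ^ (s + 2)"
      by (simp only: power_Suc)
    then have "t ^ Suc a / (1 + t) ^ (s + 3) + t ^ a / (1 + t) ^ (s + 3) = t ^ a / (1 + t) ^ (s + 2)"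
      unfolding power_Suc by (simp only:) (rule frac, use True in auto)
    with True show ?thesis
      by (simp flip: ennreal_plus)
  qed simp
  then show ?thesis
    by (subst nn_integral_add[symmetric]) auto
qed

lemma nn_integral_beta_prime:
  assumes "a \<le> s"
  shows "(\<integral>\<^sup>+t. ennreal (t ^ a / (1 + t) ^ (s + 2)) * indicator {0..} t \<partial>lborel)
    = ennreal (fact a * fact (s - a) / fact (s + 1))"
  using assms
proof (induction a arbitrary: s)
  case 0
  have "1 / (real s + 1) = fact s / fact (s + 1)"
    by (simp add: divide_simps del: fact_Suc) (simp add: algebra_simps)
  then show ?case
    using nn_integral_inverse_one_plus_power[of s] by simp
next
  case (Suc a)
  let ?K = "\<lambda>a s. \<integral>\<^sup>+t. ennreal (t ^ a / (1 + t) ^ (s + 2)) * indicator {0..} t \<partial>lborel"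
  obtain d where s: "s = Suc (a + d)"
    using Suc.prems by (metis add_Suc le_iff_add)
  have "s + 2 = a + d + 3"
    by (simp add: s)
  then have recurrence: "?K (Suc a) s + ?K a s = ?K a (a + d)"
    using nn_integral_beta_prime_add[of a "a + d"] by (simp only:)
  have IH: "?K a s = ennreal (fact a * fact (Suc d) / fact (a + d + 2))"
    "?K a (a + d) = ennreal (fact a * fact d / fact (a + d + 1))"
    using Suc.IH[of s] Suc.IH[of "a + d"] by (simp_all add: s Suc_diff_le)
  have "?K (Suc a) s = ?K (Suc a) s + ?K a s - ?K a s"
    using IH(1) by (simp add: ennreal_add_diff_cancel_right)
  also have "\<dots> = ennreal (fact a * fact d / fact (a + d + 1))
      - ennreal (fact a * fact (Suc d) / fact (a + d + 2))"
    unfolding recurrence unfolding IH ..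
  also have "\<dots> = ennreal (fact (Suc a) * fact d / fact (a + d + 2))"
    by (subst ennreal_minus) (simp, simp only: fact_recurrence_beta)
  finally show ?case
    by (simp add: s)
qed

section \<open>Moments of \<open>\<iota>\<^sub>\<tau>\<close>\<close>

lemma borel_measurable_cnj [measurable]: "cnj \<in> borel_measurable borel"
  by (intro borel_measurable_continuous_onI continuous_intros)

definition iota_density :: "nat \<Rightarrow> complex \<Rightarrow> real" where
  "iota_density \<tau> z = (real \<tau> + 1) / (pi * (1 + (cmod z)\<^sup>2) ^ (\<tau> + 2))"

lemma iota_density_nonneg: "0 \<le> iota_density \<tau> z"
  by (simp add: iota_density_def)

lemma iota_density_measurable [measurable]: "iota_density \<tau> \<in> borel_measurable borel"
  unfolding iota_density_def by measurable

lemma iota_eq_density: "iota \<tau> = density lborel (\<lambda>z. ennreal (iota_density \<tau> z))"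
  unfolding iota_def iota_density_def ..

lemma space_iota [simp]: "space (iota \<tau>) = UNIV"
  by (simp add: iota_def)

lemma sets_iota [simp, measurable_cong]: "sets (iota \<tau>) = sets borel"
  by (simp add: iota_def)

lemma nn_integral_iota_density_norm_power:
  assumes "a \<le> \<tau>"
  shows "(\<integral>\<^sup>+z. ennreal (iota_density \<tau> z * cmod z ^ (2 * a)) \<partial>lborel) = ennreal (1 / real (\<tau> choose a))"
proof -
  let ?c = "(real \<tau> + 1) / pi"
  have "(\<integral>\<^sup>+z. ennreal (iota_density \<tau> z * cmod z ^ (2 * a)) \<partial>lborel)
      = (\<integral>\<^sup>+z. ennreal ?c * ennreal (((cmod z)\<^sup>2) ^ a / (1 + (cmod z)\<^sup>2) ^ (\<tau> + 2)) \<partial>lborel)"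
  proof (intro nn_integral_cong)
    fix z :: complex
    have "iota_density \<tau> z * ((cmod z)\<^sup>2) ^ a = ?c * (((cmod z)\<^sup>2) ^ a / (1 + (cmod z)\<^sup>2) ^ (\<tau> + 2))"
      by (simp add: iota_density_def)
    then show "ennreal (iota_density \<tau> z * cmod z ^ (2 * a))
        = ennreal ?c * ennreal (((cmod z)\<^sup>2) ^ a / (1 + (cmod z)\<^sup>2) ^ (\<tau> + 2))"
      by (simp add: power_mult ennreal_mult'[symmetric])
  qed
  also have "\<dots> = ennreal pi * (ennreal ?c *
      (\<integral>\<^sup>+t. ennreal (t ^ a / (1 + t) ^ (\<tau> + 2)) * indicator {0..} t \<partial>lborel))"
    by (subst nn_integral_lborel_complex_radial) (auto simp: nn_integral_cmult mult.assoc)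
  also have "\<dots> = ennreal ((real \<tau> + 1) * (fact a * fact (\<tau> - a) / fact (\<tau> + 1)))"
    using assms by (subst nn_integral_beta_prime) (simp_all add: ennreal_mult'[symmetric])
  also have "(real \<tau> + 1) * (fact a * fact (\<tau> - a) / fact (\<tau> + 1)) = 1 / real (\<tau> choose a)"
    using assms by (simp add: binomial_fact divide_simps del: fact_Suc) (simp add: algebra_simps)
  finally show ?thesis .
qed

lemma emeasure_iota_UNIV: "emeasure (iota \<tau>) UNIV = 1"
  using nn_integral_iota_density_norm_power[of 0 \<tau>]
  by (simp add: iota_eq_density emeasure_density)

lemma finite_measure_iota: "finite_measure (iota \<tau>)"
  by (rule finite_measureI) (simp add: emeasure_iota_UNIV)

lemma integrable_iota_monomial:
  assumes "a + b \<le> 2 * \<tau>"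
  shows "integrable (iota \<tau>) (\<lambda>z. z ^ a * cnj z ^ b)"
proof -
  \<comment> \<open>the weight \<open>(1 + |z|\<^sup>2)\<^sup>\<tau>\<close> dominates the monomial and turns \<open>\<iota>\<^sub>\<tau>\<close> into a multiple of \<open>\<iota>\<^sub>0\<close>\<close>
  have dens: "iota_density \<tau> z * (1 + (cmod z)\<^sup>2) ^ \<tau> = (real \<tau> + 1) * iota_density 0 z" for z
    by (simp add: iota_density_def power_add)
  have "integrable lborel (iota_density 0)"
    using nn_integral_iota_density_norm_power[of 0 0]
    by (intro integrableI_nonneg) (auto simp: iota_density_nonneg)
  then have dom: "integrable lborel (\<lambda>z. iota_density \<tau> z * (1 + (cmod z)\<^sup>2) ^ \<tau>)"
    unfolding dens by simp
  have bound: "cmod z ^ (a + b) \<le> (1 + (cmod z)\<^sup>2) ^ \<tau>" for z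
  proof (cases "cmod z \<le> 1")
    case True
    then show ?thesis
      by (intro order.trans[OF power_le_one one_le_power]) auto
  next
    case False
    then have "cmod z ^ (a + b) \<le> ((cmod z)\<^sup>2) ^ \<tau>"
      using assms by (simp add: power_mult[symmetric] power_increasing)
    also have "\<dots> \<le> (1 + (cmod z)\<^sup>2) ^ \<tau>"
      by (intro power_mono) auto
    finally show ?thesis .
  qed
  have "integrable lborel (\<lambda>z. iota_density \<tau> z *\<^sub>R (z ^ a * cnj z ^ b))"
    by (intro Bochner_Integration.integrable_bound[OF dom] AE_I2)
      (auto intro!: mult_left_mono bound[unfolded power_add]
        simp: iota_density_nonneg norm_mult norm_power)
  then show ?thesis
    unfolding iota_eq_density by (subst integrable_density) (auto simp: iota_density_nonneg)
qed

lemma integral_iota_eq_lborel: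
  fixes f :: "complex \<Rightarrow> complex"
  assumes [measurable]: "f \<in> borel_measurable borel"
  shows "integral\<^sup>L (iota \<tau>) f = (LINT z|lborel. iota_density \<tau> z *\<^sub>R f z)"
  unfolding iota_eq_density by (subst integral_density) (auto simp: iota_density_nonneg)

lemma integral_iota_mult_unit:
  fixes f :: "complex \<Rightarrow> complex"
  assumes "cmod u = 1" and [measurable]: "f \<in> borel_measurable borel"
  shows "(LINT z|iota \<tau>. f (u * z)) = (LINT z|iota \<tau>. f z)"
proof -
  have "iota_density \<tau> (u * z) = iota_density \<tau> z" for z
    using assms(1) by (simp add: iota_density_def norm_mult)
  then have "(LINT z|iota \<tau>. f (u * z)) = (LINT z|lborel. (\<lambda>z. iota_density \<tau> z *\<^sub>R f z) (u * z))"
    by (simp add: integral_iota_eq_lborel)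
  also have "\<dots> = (LINT z|distr lborel borel (\<lambda>z. u * z). iota_density \<tau> z *\<^sub>R f z)"
    by (rule integral_distr[symmetric]) auto
  also have "\<dots> = (LINT z|iota \<tau>. f z)"
    by (simp add: lborel_complex_distr_mult_unit assms integral_iota_eq_lborel)
  finally show ?thesis .
qed

lemma integral_iota_monomial:
  assumes "a + b \<le> 2 * \<tau>"
  shows "(LINT z|iota \<tau>. z ^ a * cnj z ^ b) = (if a = b then 1 / of_nat (\<tau> choose a) else 0)"
proof (cases "a = b")
  case True
  have pointwise: "iota_density \<tau> z *\<^sub>R (z ^ a * cnj z ^ a)
      = complex_of_real (iota_density \<tau> z * cmod z ^ (2 * a))" for z
    by (simp add: power_mult_distrib[symmetric] power_mult scaleR_conv_of_real
        flip: complex_norm_square)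
  have "(LINT z|iota \<tau>. z ^ a * cnj z ^ a)
      = complex_of_real (LINT z|lborel. iota_density \<tau> z * cmod z ^ (2 * a))"
    by (subst integral_iota_eq_lborel, measurable) (simp only: pointwise integral_complex_of_real)
  also have "(LINT z|lborel. iota_density \<tau> z * cmod z ^ (2 * a)) = 1 / real (\<tau> choose a)"
    using True assms
    by (subst integral_eq_nn_integral) (auto simp: iota_density_nonneg nn_integral_iota_density_norm_power)
  finally show ?thesis
    using True by simp
next
  case False
  \<comment> \<open>the rotation \<open>z \<mapsto> u z\<close> with \<open>u = cis (\<pi> / (a - b))\<close> multiplies the integrand by \<open>u^a (cnj u)^b = -1\<close>\<close>
  define \<theta> where "\<theta> = pi / (real a - real b)"
  define u where "u = cis \<theta>"
  have "u ^ a * cnj u ^ b = cis (real a * \<theta> + real b * - \<theta>)"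
    by (simp only: u_def cis_cnj Complex.DeMoivre cis_mult)
  also have "real a * \<theta> + real b * - \<theta> = (real a - real b) * \<theta>"
    by (simp add: algebra_simps)
  also have "\<dots> = pi"
    using False by (simp add: \<theta>_def)
  finally have u: "u ^ a * cnj u ^ b = -1"
    by simp
  have "(LINT z|iota \<tau>. z ^ a * cnj z ^ b) = (LINT z|iota \<tau>. (u * z) ^ a * cnj (u * z) ^ b)"
    by (rule integral_iota_mult_unit[symmetric]) (auto simp: u_def)
  also have "\<dots> = - (LINT z|iota \<tau>. z ^ a * cnj z ^ b)"
    using u by (simp add: power_mult_distrib mult_ac flip: mult.assoc)
  finally show ?thesis
    using False by simp
qed

lemma pair_sigma_finite_iota: "pair_sigma_finite (iota \<mu>) (iota \<nu>)"
  using finite_measure_iota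
  by (simp add: pair_sigma_finite_def finite_measure_def)

lemma integral_pair_iota_monomial:
  assumes "i + i' \<le> 2 * \<mu>" "j + j' \<le> 2 * \<nu>"
  shows "integrable (iota \<mu> \<Otimes>\<^sub>M iota \<nu>)
      (\<lambda>p. fst p ^ i * cnj (fst p) ^ i' * (snd p ^ j * cnj (snd p) ^ j'))"
    and "(LINT p|(iota \<mu> \<Otimes>\<^sub>M iota \<nu>). fst p ^ i * cnj (fst p) ^ i' * (snd p ^ j * cnj (snd p) ^ j'))
      = (if i = i' then 1 / of_nat (\<mu> choose i) else 0) * (if j = j' then 1 / of_nat (\<nu> choose j) else 0)"
  using pair_sigma_finite.integral_mult_fst_snd[OF pair_sigma_finite_iota
      integrable_iota_monomial[OF assms(1)] integrable_iota_monomial[OF assms(2)]]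
  by (simp_all add: integral_iota_monomial assms)

section \<open>Orthogonality of monomials\<close>

definition bipoly :: "nat \<Rightarrow> nat \<Rightarrow> (nat \<Rightarrow> nat \<Rightarrow> complex) \<Rightarrow> complex \<times> complex \<Rightarrow> complex" where
  "bipoly \<mu> \<nu> c = (\<lambda>(z, w). \<Sum>i\<le>\<mu>. \<Sum>j\<le>\<nu>. c i j * z ^ i * w ^ j)"

lemma Tspace_iff_bipoly: "F \<in> Tspace \<mu> \<nu> \<longleftrightarrow> (\<exists>c. F = bipoly \<mu> \<nu> c)"
  by (simp add: Tspace_def bipoly_def)

lemma innerT_bipoly:
  "innerT \<mu> \<nu> (bipoly \<mu> \<nu> c) (bipoly \<mu> \<nu> d)
    = (\<Sum>i\<le>\<mu>. \<Sum>j\<le>\<nu>. c i j * cnj (d i j) / (of_nat (\<mu> choose i) * of_nat (\<nu> choose j)))"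
proof -
  let ?m = "\<lambda>i j i' j' (p :: complex \<times> complex).
    fst p ^ i * cnj (fst p) ^ i' * (snd p ^ j * cnj (snd p) ^ j')"
  have expand: "bipoly \<mu> \<nu> c p * cnj (bipoly \<mu> \<nu> d p)
      = (\<Sum>i\<le>\<mu>. \<Sum>j\<le>\<nu>. \<Sum>i'\<le>\<mu>. \<Sum>j'\<le>\<nu>. (c i j * cnj (d i' j')) * ?m i j i' j' p)" for p
    by (cases p) (simp only: bipoly_def prod.case cnj_sum complex_cnj_mult complex_cnj_power
        sum_distrib_right, simp only: sum_distrib_left, simp add: mult_ac)
  have integrable: "integrable (iota \<mu> \<Otimes>\<^sub>M iota \<nu>) (\<lambda>p. x * ?m i j i' j' p)"
    if "i \<le> \<mu>" "i' \<le> \<mu>" "j \<le> \<nu>" "j' \<le> \<nu>" for x i j i' j'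
    using that by (intro integrable_mult_right integral_pair_iota_monomial) auto
  have "innerT \<mu> \<nu> (bipoly \<mu> \<nu> c) (bipoly \<mu> \<nu> d)
      = (\<Sum>i\<le>\<mu>. \<Sum>j\<le>\<nu>. LINT p|(iota \<mu> \<Otimes>\<^sub>M iota \<nu>).
          (\<Sum>i'\<le>\<mu>. \<Sum>j'\<le>\<nu>. (c i j * cnj (d i' j')) * ?m i j i' j' p))"
    unfolding innerT_def expand
    by (rule integral_double_sum(2)) (auto intro!: integral_double_sum(1) integrable)
  also have "\<dots> = (\<Sum>i\<le>\<mu>. \<Sum>j\<le>\<nu>. \<Sum>i'\<le>\<mu>. \<Sum>j'\<le>\<nu>. (c i j * cnj (d i' j')) *
          ((if i = i' then 1 / of_nat (\<mu> choose i) else 0) * (if j = j' then 1 / of_nat (\<nu> choose j) else 0)))"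
    by (intro sum.cong refl, subst integral_double_sum(2))
      (auto intro: integrable simp: integral_pair_iota_monomial)
  also have "\<dots> = (\<Sum>i\<le>\<mu>. \<Sum>j\<le>\<nu>. c i j * cnj (d i j) / (of_nat (\<mu> choose i) * of_nat (\<nu> choose j)))"
    by (intro sum.cong refl)
      (simp add: if_distrib[of "\<lambda>x. _ * x"] if_distrib[of "\<lambda>x. x * _"] if_distrib[of "\<lambda>x. x / _"]
        sum.delta cong: if_cong)
  finally show ?thesis .
qed

lemma Tspace_eqI:
  assumes G: "G \<in> Tspace \<mu> \<nu>" and G': "G' \<in> Tspace \<mu> \<nu>"
    and eq: "\<And>F. F \<in> Tspace \<mu> \<nu> \<Longrightarrow> innerT \<mu> \<nu> F G = innerT \<mu> \<nu> F G'"
  shows "G = G'"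
proof -
  obtain d d' where d: "G = bipoly \<mu> \<nu> d" and d': "G' = bipoly \<mu> \<nu> d'"
    using G G' by (auto simp: Tspace_iff_bipoly)
  \<comment> \<open>test against the monomials \<open>z\<^sup>a w\<^sup>b\<close>, which are orthogonal with nonzero norms\<close>
  have "d a b = d' a b" if "a \<le> \<mu>" "b \<le> \<nu>" for a b
  proof -
    let ?e = "\<lambda>i j. if j = b then if i = a then 1 else 0 else 0"
    have inner: "innerT \<mu> \<nu> (bipoly \<mu> \<nu> ?e) (bipoly \<mu> \<nu> c)
        = cnj (c a b) / (of_nat (\<mu> choose a) * of_nat (\<nu> choose b))" for c
      using that by (simp add: innerT_bipoly if_distrib[of "\<lambda>x. x * _"] if_distrib[of "\<lambda>x. x / _"]
          sum.delta cong: if_cong)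
    have "bipoly \<mu> \<nu> ?e \<in> Tspace \<mu> \<nu>"
      by (auto simp: Tspace_iff_bipoly)
    from eq[OF this] show ?thesis
      using that by (simp add: d d' inner)
  qed
  then show ?thesis
    by (auto simp: d d' bipoly_def fun_eq_iff intro!: sum.cong)
qed

lemma diff_power_eq_bipoly:
  assumes "k \<le> \<mu>" "k \<le> \<nu>"
  shows "(\<lambda>(z, w). (z - w) ^ k)
    = bipoly \<mu> \<nu> (\<lambda>i j. if i + j = k then of_nat (k choose i) * (- 1) ^ j else 0)"
proof -
  have "(\<Sum>i\<le>\<mu>. \<Sum>j\<le>\<nu>. (if i + j = k then of_nat (k choose i) * (- 1) ^ j else 0) * z ^ i * w ^ j)
      = (\<Sum>i\<le>\<mu>. \<Sum>j\<le>\<nu>. if i + j = k then of_nat (k choose i) * (- 1) ^ j * z ^ i * w ^ j else 0)"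
    for z w :: complex
    by (intro sum.cong) auto
  also have "\<dots> z w = (\<Sum>i\<le>k. of_nat (k choose i) * (- 1) ^ (k - i) * z ^ i * w ^ (k - i))" for z w
    by (rule sum_sum_if_add_eq[OF assms])
  also have "\<dots> z w = (z - w) ^ k" for z w
    by (rule diff_power_binomial[symmetric])
  finally show ?thesis
    by (simp add: bipoly_def fun_eq_iff)
qed

lemma innerT_diff_power:
  assumes "k \<le> \<mu>" "k \<le> \<nu>"
  shows "innerT \<mu> \<nu> (\<lambda>(z, w). (z - w) ^ k) (\<lambda>(z, w). (z - w) ^ k)
    = (\<Sum>i\<le>k. of_nat ((k choose i)\<^sup>2) / (of_nat (\<mu> choose i) * of_nat (\<nu> choose (k - i))))"
proof -
  have sign: "(- 1 :: complex) ^ j * (- 1) ^ j = 1" for j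
    by (simp flip: power_mult_distrib)
  have "innerT \<mu> \<nu> (\<lambda>(z, w). (z - w) ^ k) (\<lambda>(z, w). (z - w) ^ k)
      = (\<Sum>i\<le>\<mu>. \<Sum>j\<le>\<nu>. if i + j = k
          then of_nat ((k choose i)\<^sup>2) / (of_nat (\<mu> choose i) * of_nat (\<nu> choose j)) else 0)"
    unfolding diff_power_eq_bipoly[OF assms] innerT_bipoly
    by (intro sum.cong) (auto simp: power2_eq_square sign mult_ac)
  also have "\<dots> = (\<Sum>i\<le>k. of_nat ((k choose i)\<^sup>2) / (of_nat (\<mu> choose i) * of_nat (\<nu> choose (k - i))))"
    by (rule sum_sum_if_add_eq[OF assms])
  finally show ?thesis .
qed

lemma sum_monomials_in_Hspace:
  assumes "finite A" "\<And>x. x \<in> A \<Longrightarrow> e x \<le> \<tau>"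
  shows "(\<lambda>\<xi>. \<Sum>x\<in>A. b x * \<xi> ^ e x) \<in> Hspace \<tau>"
proof -
  have "(\<Sum>x\<in>A. b x * \<xi> ^ e x) = (\<Sum>n\<le>\<tau>. \<Sum>x | x \<in> A \<and> e x = n. b x * \<xi> ^ e x)" for \<xi>
    by (rule sum.group[symmetric]) (use assms in auto)
  also have "\<dots> \<xi> = (\<Sum>n\<le>\<tau>. (\<Sum>x | x \<in> A \<and> e x = n. b x) * \<xi> ^ n)" for \<xi>
    by (auto simp: sum_distrib_right intro!: sum.cong)
  finally show ?thesis
    unfolding Hspace_def by (auto intro!: exI[of _ "\<lambda>n. \<Sum>x | x \<in> A \<and> e x = n. b x"])
qed

lemma innerH_one_eq_at_zero:
  assumes "f \<in> Hspace \<tau>"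
  shows "innerH \<tau> f (\<lambda>_. 1) = f 0"
proof -
  obtain c where f: "f = (\<lambda>z. \<Sum>i\<le>\<tau>. c i * z ^ i)"
    using assms unfolding Hspace_def by blast
  have "(LINT z|iota \<tau>. z ^ i) = (if i = 0 then 1 else 0)" if "i \<le> \<tau>" for i
    using integral_iota_monomial[of i 0 \<tau>] that by simp
  moreover have "integrable (iota \<tau>) (\<lambda>z. z ^ i)" if "i \<le> \<tau>" for i
    using integrable_iota_monomial[of i 0 \<tau>] that by simp
  ultimately show ?thesis
    by (simp add: innerH_def f Bochner_Integration.integral_sum if_distrib[of "\<lambda>x. _ * x"]
        sum.delta cong: if_cong)
qed

section \<open>The map \<open>J\<^sub>k\<close> and its adjoint\<close>

lemma integrable_bipoly_mult_cnj:
  assumes "a \<le> \<mu>" "b \<le> \<nu>"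
  shows "integrable (iota \<mu> \<Otimes>\<^sub>M iota \<nu>) (\<lambda>x. bipoly \<mu> \<nu> c x * cnj (fst x) ^ a * cnj (snd x) ^ b)"
proof -
  have expand: "bipoly \<mu> \<nu> c x * cnj (fst x) ^ a * cnj (snd x) ^ b
      = (\<Sum>i\<le>\<mu>. \<Sum>j\<le>\<nu>. c i j * (fst x ^ i * cnj (fst x) ^ a * (snd x ^ j * cnj (snd x) ^ b)))" for x
    by (cases x) (simp only: bipoly_def prod.case sum_distrib_right, simp add: mult_ac)
  show ?thesis
    unfolding expand using assms
    by (intro integral_double_sum(1) integrable_mult_right integral_pair_iota_monomial(1)) auto
qed

lemma integrable_Jk_integrand:
  assumes "F \<in> Tspace \<mu> \<nu>" "k + p \<le> \<mu>" "k + q \<le> \<nu>"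
  shows "integrable (iota \<mu> \<Otimes>\<^sub>M iota \<nu>)
    (\<lambda>x. F x * (cnj (fst x) - cnj (snd x)) ^ k * cnj (fst x) ^ p * cnj (snd x) ^ q)"
proof -
  obtain c where F: "F = bipoly \<mu> \<nu> c"
    using assms(1) by (auto simp: Tspace_iff_bipoly)
  have expand: "F x * (cnj (fst x) - cnj (snd x)) ^ k * cnj (fst x) ^ p * cnj (snd x) ^ q
      = (\<Sum>r\<le>k. of_nat (k choose r) * (- 1) ^ (k - r) *
          (F x * cnj (fst x) ^ (r + p) * cnj (snd x) ^ (k - r + q)))" for x
    by (simp only: diff_power_binomial sum_distrib_left sum_distrib_right power_add)
      (simp add: mult_ac)
  show ?thesis
    unfolding expand
  proof (intro Bochner_Integration.integrable_sum integrable_mult_right)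
    fix r assume "r \<in> {..k}"
    then show "integrable (iota \<mu> \<Otimes>\<^sub>M iota \<nu>)
        (\<lambda>x. F x * cnj (fst x) ^ (r + p) * cnj (snd x) ^ (k - r + q))"
      unfolding F using assms by (intro integrable_bipoly_mult_cnj) auto
  qed
qed

lemma Jk_expand:
  assumes "F \<in> Tspace \<mu> \<nu>" "k \<le> \<mu>" "k \<le> \<nu>"
  shows "Jk \<mu> \<nu> k F \<xi> = (\<Sum>p\<le>\<mu> - k. \<Sum>q\<le>\<nu> - k.
    (of_nat (\<mu> - k choose p) * of_nat (\<nu> - k choose q) *
      (LINT x|(iota \<mu> \<Otimes>\<^sub>M iota \<nu>).
        F x * (cnj (fst x) - cnj (snd x)) ^ k * cnj (fst x) ^ p * cnj (snd x) ^ q)) * \<xi> ^ (p + q))"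
proof -
  have expand: "F x * (cnj (fst x) - cnj (snd x)) ^ k * (1 + \<xi> * cnj (fst x)) ^ (\<mu> - k)
      * (1 + \<xi> * cnj (snd x)) ^ (\<nu> - k)
    = (\<Sum>p\<le>\<mu> - k. \<Sum>q\<le>\<nu> - k. (of_nat (\<mu> - k choose p) * of_nat (\<nu> - k choose q) * \<xi> ^ (p + q))
        * (F x * (cnj (fst x) - cnj (snd x)) ^ k * cnj (fst x) ^ p * cnj (snd x) ^ q))" for x
    by (simp only: one_plus_power_binomial sum_distrib_left sum_distrib_right
        power_mult_distrib power_add) (subst sum.swap, simp add: mult_ac)
  show ?thesis
    unfolding Jk_def expand using assms
    by (subst integral_double_sum(2))
      (auto intro!: integrable_mult_right integrable_Jk_integrand sum.cong)
qed

lemma Jk_in_Hspace: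
  assumes "F \<in> Tspace \<mu> \<nu>" "k \<le> \<mu>" "k \<le> \<nu>"
  shows "Jk \<mu> \<nu> k F \<in> Hspace (\<mu> + \<nu> - 2 * k)"
proof -
  define B where "B x = of_nat (\<mu> - k choose fst x) * of_nat (\<nu> - k choose snd x) *
    (LINT y|(iota \<mu> \<Otimes>\<^sub>M iota \<nu>).
      F y * (cnj (fst y) - cnj (snd y)) ^ k * cnj (fst y) ^ fst x * cnj (snd y) ^ snd x)" for x
  have "Jk \<mu> \<nu> k F = (\<lambda>\<xi>. \<Sum>x\<in>{..\<mu> - k} \<times> {..\<nu> - k}. B x * \<xi> ^ (fst x + snd x))"
    by (simp add: fun_eq_iff Jk_expand[OF assms] sum.cartesian_product B_def case_prod_beta)
  then show ?thesis
    using assms by (auto intro!: sum_monomials_in_Hspace)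
qed

lemma Jk_at_zero: "Jk \<mu> \<nu> k F 0 = innerT \<mu> \<nu> F (\<lambda>(z, w). (z - w) ^ k)"
  by (simp add: Jk_def innerT_def case_prod_beta)

lemma innerH_Jk_one:
  assumes "F \<in> Tspace \<mu> \<nu>" "k \<le> \<mu>" "k \<le> \<nu>"
  shows "innerH (\<mu> + \<nu> - 2 * k) (Jk \<mu> \<nu> k F) (\<lambda>_. 1) = innerT \<mu> \<nu> F (\<lambda>(z, w). (z - w) ^ k)"
  using innerH_one_eq_at_zero[OF Jk_in_Hspace[OF assms]] by (simp add: Jk_at_zero)

lemma Jk_adj_eqI:
  assumes "G \<in> Tspace \<mu> \<nu>"
    and "\<And>F. F \<in> Tspace \<mu> \<nu> \<Longrightarrow> innerH (\<mu> + \<nu> - 2 * k) (Jk \<mu> \<nu> k F) g = innerT \<mu> \<nu> F G"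
  shows "Jk_adj \<mu> \<nu> k g = G"
  unfolding Jk_adj_def
proof (rule the_equality)
  fix G' assume "G' \<in> Tspace \<mu> \<nu> \<and>
      (\<forall>F\<in>Tspace \<mu> \<nu>. innerH (\<mu> + \<nu> - 2 * k) (Jk \<mu> \<nu> k F) g = innerT \<mu> \<nu> F G')"
  with assms show "G' = G"
    by (intro Tspace_eqI) auto
qed (use assms in auto)

lemma Jk_adj_one:
  assumes "k \<le> \<mu>" "k \<le> \<nu>"
  shows "Jk_adj \<mu> \<nu> k (\<lambda>_. 1) = (\<lambda>(z, w). (z - w) ^ k)"
proof (rule Jk_adj_eqI)
  show "(\<lambda>(z, w). (z - w) ^ k) \<in> Tspace \<mu> \<nu>"
    by (auto simp: Tspace_iff_bipoly diff_power_eq_bipoly[OF assms])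
qed (use assms innerH_Jk_one in auto)

section \<open>The combinatorial identity\<close>

lemma choose_square_mult_choose:
  assumes "i \<le> k" "k \<le> \<mu>" "k \<le> \<nu>"
  shows "(k choose i)\<^sup>2 * (\<mu> choose k) * (\<nu> choose k)
    = (\<mu> choose i) * (\<nu> choose (k - i)) * ((\<mu> - i choose (k - i)) * (\<nu> - k + i choose i))"
proof -
  have \<mu>: "(\<mu> choose k) * (k choose i) = (\<mu> choose i) * (\<mu> - i choose (k - i))"
    using assms by (intro choose_mult) auto
  have "(\<nu> choose k) * (k choose (k - i)) = (\<nu> choose (k - i)) * (\<nu> - (k - i) choose (k - (k - i)))"
    using assms by (intro choose_mult) auto
  moreover have "k choose (k - i) = k choose i" "\<nu> - (k - i) = \<nu> - k + i" "k - (k - i) = i"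
    using assms by (simp_all add: binomial_symmetric[symmetric])
  ultimately have \<nu>: "(\<nu> choose k) * (k choose i) = (\<nu> choose (k - i)) * (\<nu> - k + i choose i)"
    by simp
  have "(k choose i)\<^sup>2 * (\<mu> choose k) * (\<nu> choose k) = ((\<mu> choose k) * (k choose i)) * ((\<nu> choose k) * (k choose i))"
    by (simp add: power2_eq_square mult_ac)
  then show ?thesis
    by (simp only: \<mu> \<nu> mult_ac)
qed

lemma sum_choose_diff_mult_choose:
  assumes "k \<le> \<mu>" "k \<le> \<nu>"
  shows "(\<Sum>i\<le>k. (\<mu> - i choose (k - i)) * (\<nu> - k + i choose i)) = \<mu> + \<nu> - k + 1 choose k"
proof -
  \<comment> \<open>negating the upper indices turns this into Vandermonde's convolution\<close>
  define X :: real where "X = - of_nat (\<nu> - k) - 1"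
  define Y :: real where "Y = - of_nat (\<mu> - k) - 1"
  have X: "real (\<nu> - k + i choose i) = (- 1) ^ i * (X gchoose i)" for i
    using gbinomial_negated_upper[of "of_nat (\<nu> - k + i)" i]
    by (simp add: binomial_gbinomial X_def)
  have Y: "real (\<mu> - i choose (k - i)) = (- 1) ^ (k - i) * (Y gchoose (k - i))" if "i \<le> k" for i
    using gbinomial_negated_upper[of "of_nat (\<mu> - i)" "k - i"] that assms
    by (simp add: binomial_gbinomial Y_def of_nat_diff)
  have "real (\<Sum>i\<le>k. (\<mu> - i choose (k - i)) * (\<nu> - k + i choose i))
      = (\<Sum>i\<le>k. (- 1) ^ k * ((X gchoose i) * (Y gchoose (k - i))))"
    by (auto simp: X Y power_add[symmetric] intro!: sum.cong)
  also have "\<dots> = (- 1) ^ k * ((X + Y) gchoose k)"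
    by (simp add: sum_distrib_left[symmetric] gbinomial_Vandermonde[symmetric] atLeast0AtMost)
  also have "\<dots> = real (\<mu> + \<nu> - k + 1 choose k)"
    using gbinomial_negated_upper[of "X + Y" k] assms
    by (simp add: binomial_gbinomial X_def Y_def of_nat_diff algebra_simps)
  finally show ?thesis
    by (simp only: of_nat_eq_iff)
qed

lemma pochhammer_minus_of_nat:
  "pochhammer (- of_nat n :: 'a::field_char_0) k = (- 1) ^ k * fact k * of_nat (n choose k)"
proof -
  have sq: "(- 1 :: 'a) ^ k * (- 1) ^ k = 1"
    by (simp flip: power_mult_distrib)
  have "(- 1) ^ k * fact k * (of_nat n gchoose k :: 'a) = (- 1) ^ k * (- 1) ^ k * pochhammer (- of_nat n) k"
    by (simp add: gbinomial_pochhammer)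
  then show ?thesis
    by (simp add: binomial_gbinomial sq)
qed

lemma pochhammer_of_nat_eq_choose:
  assumes "1 \<le> m"
  shows "pochhammer (of_nat m :: 'a::field_char_0) k = fact k * of_nat (m + k - 1 choose k)"
  using gbinomial_pochhammer'[of "of_nat (m + k - 1) :: 'a" k] assms
  by (simp add: binomial_gbinomial of_nat_diff field_simps)

lemma sum_choose_square_div_choose:
  assumes "k \<le> \<mu>" "k \<le> \<nu>"
  shows "(\<Sum>i\<le>k. of_nat ((k choose i)\<^sup>2) / (of_nat (\<mu> choose i) * of_nat (\<nu> choose (k - i))) :: 'a::field_char_0)
    = of_nat (fact k) * pochhammer (of_nat (\<mu> + \<nu> - 2 * k + 2)) k
      / (pochhammer (- of_nat \<nu>) k * pochhammer (- of_nat \<mu>) k)"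
proof -
  let ?M = "of_nat (\<mu> choose k) :: 'a" and ?V = "of_nat (\<nu> choose k) :: 'a"
  have "?M \<noteq> 0" "?V \<noteq> 0"
    using assms by auto
  have "of_nat ((k choose i)\<^sup>2) / (of_nat (\<mu> choose i) * of_nat (\<nu> choose (k - i)))
      = (of_nat ((\<mu> - i choose (k - i)) * (\<nu> - k + i choose i)) :: 'a) / (?M * ?V)" if "i \<le> k" for i
  proof -
    have "(of_nat (\<mu> choose i) :: 'a) \<noteq> 0" "(of_nat (\<nu> choose (k - i)) :: 'a) \<noteq> 0"
      using that assms by auto
    with \<open>?M \<noteq> 0\<close> \<open>?V \<noteq> 0\<close> show ?thesis
      using arg_cong[OF choose_square_mult_choose[OF that assms], of "of_nat :: nat \<Rightarrow> 'a"]
      by (simp add: field_simps)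
  qed
  then have "(\<Sum>i\<le>k. of_nat ((k choose i)\<^sup>2) / (of_nat (\<mu> choose i) * of_nat (\<nu> choose (k - i))) :: 'a)
      = of_nat (\<Sum>i\<le>k. (\<mu> - i choose (k - i)) * (\<nu> - k + i choose i)) / (?M * ?V)"
    by (simp add: sum_divide_distrib)
  also have "\<dots> = of_nat (\<mu> + \<nu> - k + 1 choose k) / (?M * ?V)"
    by (simp only: sum_choose_diff_mult_choose[OF assms])
  also have "\<dots> = of_nat (fact k) * pochhammer (of_nat (\<mu> + \<nu> - 2 * k + 2)) k
      / (pochhammer (- of_nat \<nu>) k * pochhammer (- of_nat \<mu>) k)"
  proof -
    have "\<mu> + \<nu> - 2 * k + 2 + k - 1 = \<mu> + \<nu> - k + 1"
      using assms by simp
    then have "pochhammer (of_nat (\<mu> + \<nu> - 2 * k + 2) :: 'a) k = fact k * of_nat (\<mu> + \<nu> - k + 1 choose k)"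
      using pochhammer_of_nat_eq_choose[of "\<mu> + \<nu> - 2 * k + 2" k] by simp
    moreover have "((- 1 :: 'a) ^ k) * (- 1) ^ k = 1"
      by (simp flip: power_mult_distrib)
    ultimately show ?thesis
      using \<open>?M \<noteq> 0\<close> \<open>?V \<noteq> 0\<close> by (simp add: pochhammer_minus_of_nat field_simps)
  qed
  finally show ?thesis .
qed

theorem mainTheorem1:
  fixes \<mu> \<nu> k :: nat
  assumes "k \<le> \<mu>" and "\<mu> < \<nu>"
  shows "Jk \<mu> \<nu> k (Jk_adj \<mu> \<nu> k (\<lambda>_. 1)) 0 =
    of_nat (fact k) * pochhammer (of_nat (\<mu> + \<nu> - 2 * k + 2)) k
      / (pochhammer (- of_nat \<nu>) k * pochhammer (- of_nat \<mu>) k)"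
proof -
  have k: "k \<le> \<mu>" "k \<le> \<nu>"
    using assms by simp_all
  have "Jk \<mu> \<nu> k (Jk_adj \<mu> \<nu> k (\<lambda>_. 1)) 0
      = innerT \<mu> \<nu> (\<lambda>(z, w). (z - w) ^ k) (\<lambda>(z, w). (z - w) ^ k)"
    by (simp add: Jk_adj_one[OF k] Jk_at_zero)
  also have "\<dots> = (\<Sum>i\<le>k. of_nat ((k choose i)\<^sup>2) / (of_nat (\<mu> choose i) * of_nat (\<nu> choose (k - i))))"
    by (rule innerT_diff_power[OF k])
  also have "\<dots> = of_nat (fact k) * pochhammer (of_nat (\<mu> + \<nu> - 2 * k + 2)) k
      / (pochhammer (- of_nat \<nu>) k * pochhammer (- of_nat \<mu>) k)"
    by (rule sum_choose_square_div_choose[OF k])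
  finally show ?thesis .
qed

end
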